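(* For every $-1<\theta<1$ and positive integer $k$, there exists $h>0$ such that for every $d'\ge0$ there is a probability distribution $P_F^{d'}$ over functions $F:\{0,1\}^{L_{d'}}\to\{0,1,?\}$ with the following properties: (1) every function in the support of $P_F^{d'}$ can be computed by a circuit of depth at most $hd'$ with NOT gates and fan-in-two AND/OR gates; (2) for every $x\in\{0,1\}^{L_{d'}}$, if $F\sim P_F^{d'}$ then $\mathbb{P}[F(x)\in\{0,1\}]\ge 1-1/(2k)$; (3) for every $x\in\{0,1\}^{L_{d'}}$, $\mathbb{P}[F(x)=1\mid F(x)\in\{0,1\}]=\mathbb{P}[X^{(0)}=1\mid X^{(d')}=x]$.
   Context: Broadcast (Ising) tree model: complete $k$-ary tree of depth $d'$ with root $\rho$; $L_r$ = vertices at depth $r$; $\sigma_\rho$ uniform on $\{0,1\}$; each child $v$ of $u$ independently has $\sigma_v=\sigma_u$ with probability $(1+\theta)/2$ and $1-\sigma_u$ otherwise; $X^{(r)}=(\sigma_v)_{v\in L_r}$. The three output values $0,1,?$ are encoded in binary. *)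

theory Defs
  imports "HOL-Probability.Probability"
begin

text \<open>Leaves at depth d are indexed by 0..<k^d (base-k digit order: the leaves of the
subtree of the j-th child of the root are j*k^(d-1) .. (j+1)*k^(d-1)-1).
Labels are bool (True = 1, False = 0).  Only indices below k^d are meaningful.\<close>

definition child_label :: "real \<Rightarrow> bool \<Rightarrow> bool pmf" where
  "child_label \<theta> a = map_pmf (\<lambda>c. if c then a else \<not> a) (bernoulli_pmf ((1 + \<theta>) / 2))"

fun broadcast_leaves :: "real \<Rightarrow> nat \<Rightarrow> nat \<Rightarrow> bool \<Rightarrow> (nat \<Rightarrow> bool) pmf" where
  "broadcast_leaves \<theta> k 0 a = return_pmf (\<lambda>i. a)"
| "broadcast_leaves \<theta> k (Suc d) a =
     map_pmf (\<lambda>f i. f (i div k ^ d) (i mod k ^ d))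
       (Pi_pmf {..<k} (\<lambda>i. False)
          (\<lambda>j. bind_pmf (child_label \<theta> a) (\<lambda>b. broadcast_leaves \<theta> k d b)))"

definition broadcast :: "real \<Rightarrow> nat \<Rightarrow> nat \<Rightarrow> (bool \<times> (nat \<Rightarrow> bool)) pmf" where
  "broadcast \<theta> k d =
     bind_pmf (bernoulli_pmf (1/2)) (\<lambda>r. map_pmf (\<lambda>X. (r, X)) (broadcast_leaves \<theta> k d r))"

definition root_posterior :: "real \<Rightarrow> nat \<Rightarrow> nat \<Rightarrow> (nat \<Rightarrow> bool) \<Rightarrow> real" where
  "root_posterior \<theta> k d x =
     measure_pmf.prob (broadcast \<theta> k d) {(r, X). r \<and> (\<forall>i < k ^ d. X i = x i)}
     / measure_pmf.prob (broadcast \<theta> k d) {(r, X). \<forall>i < k ^ d. X i = x i}"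

text \<open>A depth-bounded circuit can be unfolded into a formula of the same depth, so circuits
are represented as formula trees.  Inputs and constants have depth 0.\<close>
datatype circ = Inp nat | Cst bool | NotG circ | AndG circ circ | OrG circ circ

fun eval_circ :: "circ \<Rightarrow> (nat \<Rightarrow> bool) \<Rightarrow> bool" where
  "eval_circ (Inp i) x = x i"
| "eval_circ (Cst b) x = b"
| "eval_circ (NotG c) x = (\<not> eval_circ c x)"
| "eval_circ (AndG c1 c2) x = (eval_circ c1 x \<and> eval_circ c2 x)"
| "eval_circ (OrG c1 c2) x = (eval_circ c1 x \<or> eval_circ c2 x)"

fun circ_depth :: "circ \<Rightarrow> nat" where
  "circ_depth (Inp i) = 0"
| "circ_depth (Cst b) = 0"
| "circ_depth (NotG c) = Suc (circ_depth c)"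
| "circ_depth (AndG c1 c2) = Suc (max (circ_depth c1) (circ_depth c2))"
| "circ_depth (OrG c1 c2) = Suc (max (circ_depth c1) (circ_depth c2))"

fun circ_vars :: "circ \<Rightarrow> nat set" where
  "circ_vars (Inp i) = {i}"
| "circ_vars (Cst b) = {}"
| "circ_vars (NotG c) = circ_vars c"
| "circ_vars (AndG c1 c2) = circ_vars c1 \<union> circ_vars c2"
| "circ_vars (OrG c1 c2) = circ_vars c1 \<union> circ_vars c2"

text \<open>Output values 0,1,? are encoded by two output bits (b1,b2):
 b1 = False means ?, otherwise the value is b2.  As HOL values: None = ?, Some False = 0, Some True = 1.\<close>
definition decode_out :: "bool \<Rightarrow> bool \<Rightarrow> bool option" where
  "decode_out b1 b2 = (if b1 then Some b2 else None)"

definition computable_depth :: "nat \<Rightarrow> real \<Rightarrow> ((nat \<Rightarrow> bool) \<Rightarrow> bool option) \<Rightarrow> bool" where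
  "computable_depth n D F \<longleftrightarrow>
     (\<exists>c1 c2. circ_vars c1 \<subseteq> {..<n} \<and> circ_vars c2 \<subseteq> {..<n} \<and>
        real (max (circ_depth c1) (circ_depth c2)) \<le> D \<and>
        (\<forall>x. F x = decode_out (eval_circ c1 x) (eval_circ c2 x)))"

end

theory Submission
  imports Defs
begin

(* Call a random ternary function F on the leaves of the depth-d tree likelihood proportional if
   P[F x = b] = c x * P[X^(d) = x | root = b] for some c independent of b; conditioned on answering,
   such an F outputs 1 with exactly the root posterior. For depth d+1, run independent copies on the
   k subtrees, flip each answer with probability (1 - theta)/2 as the channel to the child would, and
   answer a only if all k children answer a: the answer probabilities factor as
   (prod c) * P[X^(d+1) = x | root = a], so the new function is again likelihood proportional.
   If every copy answers with probability at least 1/2, each child answers 1 with probability at least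
   m/2, m = min((1 + theta)/2, (1 - theta)/2), so unanimity answers with probability at least (m/2)^k.
   Taking the first answer among T independent trials, T depending only on theta and k, keeps
   proportionality and raises the answering probability to 1 - 1/(2k). Each level adds only
   constant circuit depth, 1 + 4k + 3T. *)

type_synonym ternary_fn = "(nat \<Rightarrow> bool) \<Rightarrow> bool option"

lemma measure_pair_pmf_Times:
  "measure_pmf.prob (pair_pmf M N) (A \<times> B) = measure_pmf.prob M A * measure_pmf.prob N B"
proof -
  have "measure_pmf.prob (pair_pmf M N) (A \<times> B)
      = measure_pmf.prob (pair_pmf M N) ((A \<inter> set_pmf M) \<times> (B \<inter> set_pmf N))"
    by (subst measure_Int_set_pmf[symmetric]) (auto intro: arg_cong2[where f = measure])
  also have "\<dots> = measure_pmf.prob M (A \<inter> set_pmf M) * measure_pmf.prob N (B \<inter> set_pmf N)"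
    by (rule measure_pmf_prob_product) auto
  finally show ?thesis by (simp add: measure_Int_set_pmf)
qed

lemma measure_bind_pmf_bool:
  fixes M :: "bool pmf"
  shows "measure_pmf.prob (bind_pmf M N) X
    = pmf M True * measure_pmf.prob (N True) X + pmf M False * measure_pmf.prob (N False) X"
proof -
  have "emeasure (measure_pmf (bind_pmf M N)) X = (\<Sum>b\<in>UNIV. emeasure (N b) X * pmf M b)"
    by (simp add: emeasure_bind_pmf) (subst nn_integral_measure_pmf_support[of UNIV]; simp)
  also have "\<dots> = ennreal (pmf M True * measure_pmf.prob (N True) X
                          + pmf M False * measure_pmf.prob (N False) X)"
    by (simp add: UNIV_bool measure_pmf.emeasure_eq_measure ennreal_mult' ennreal_plus mult.commute)
  finally show ?thesis
    by (simp add: measure_pmf.emeasure_eq_measure del: ennreal_plus)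
qed

lemma pmf_child_label:
  assumes "-1 \<le> \<theta>" "\<theta> \<le> 1"
  shows "pmf (child_label \<theta> a) b = (if a = b then (1 + \<theta>) / 2 else (1 - \<theta>) / 2)"
proof -
  have "{c. c} = {True}" "{c. \<not> c} = {False}" by auto
  with assms show ?thesis
    unfolding child_label_def
    by (cases a; cases b) (auto simp: pmf_map vimage_def measure_pmf_single field_simps)
qed

section \<open>Likelihoods in the broadcast model\<close>

definition subtree_input :: "nat \<Rightarrow> nat \<Rightarrow> (nat \<Rightarrow> bool) \<Rightarrow> nat \<Rightarrow> bool" where
  "subtree_input n j x = (\<lambda>i. x (j * n + i))"

lemma vimage_uncurry_blocks:
  assumes "0 < n"
  shows "(\<lambda>f i. f (i div n) (i mod n)) -` {X. \<forall>i<k * n. X i = x i}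
       = Pi {..<k} (\<lambda>j. {X. \<forall>i<n. X i = subtree_input n j x i})"
proof (intro set_eqI iffI)
  fix f :: "nat \<Rightarrow> nat \<Rightarrow> bool"
  assume f: "f \<in> (\<lambda>f i. f (i div n) (i mod n)) -` {X. \<forall>i<k * n. X i = x i}"
  show "f \<in> Pi {..<k} (\<lambda>j. {X. \<forall>i<n. X i = subtree_input n j x i})"
  proof (intro Pi_I CollectI allI impI)
    fix j i assume "j \<in> {..<k}" and "i < n"
    then have "j * n + i < Suc j * n" by simp
    also have "\<dots> \<le> k * n" using \<open>j \<in> {..<k}\<close> by (intro mult_le_mono1) simp
    finally have "j * n + i < k * n" .
    with f \<open>i < n\<close> show "f j i = subtree_input n j x i"
      by (auto simp: subtree_input_def)
  qed
next
  fix f :: "nat \<Rightarrow> nat \<Rightarrow> bool"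
  assume f: "f \<in> Pi {..<k} (\<lambda>j. {X. \<forall>i<n. X i = subtree_input n j x i})"
  show "f \<in> (\<lambda>f i. f (i div n) (i mod n)) -` {X. \<forall>i<k * n. X i = x i}"
  proof (intro vimageI2 CollectI allI impI)
    fix i assume "i < k * n"
    then have "i div n < k" by (simp add: div_less_iff_less_mult assms)
    then have "f (i div n) (i mod n) = subtree_input n (i div n) x (i mod n)"
      using Pi_mem[OF f, of "i div n"] assms by simp
    then show "f (i div n) (i mod n) = x i"
      by (simp add: subtree_input_def mult.commute)
  qed
qed

definition leaf_likelihood :: "real \<Rightarrow> nat \<Rightarrow> nat \<Rightarrow> bool \<Rightarrow> (nat \<Rightarrow> bool) \<Rightarrow> real" where
  "leaf_likelihood \<theta> k d a x = measure_pmf.prob (broadcast_leaves \<theta> k d a) {X. \<forall>i<k ^ d. X i = x i}"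

lemma leaf_likelihood_0: "leaf_likelihood \<theta> k 0 a x = (if x 0 = a then 1 else 0)"
  by (auto simp: leaf_likelihood_def indicator_def)

lemma leaf_likelihood_Suc:
  assumes "0 < k"
  shows "leaf_likelihood \<theta> k (Suc d) a x =
    (\<Prod>j<k. pmf (child_label \<theta> a) True * leaf_likelihood \<theta> k d True (subtree_input (k ^ d) j x)
           + pmf (child_label \<theta> a) False * leaf_likelihood \<theta> k d False (subtree_input (k ^ d) j x))"
proof -
  have blocks: "(\<lambda>f i. f (i div k ^ d) (i mod k ^ d)) -` {X. \<forall>i<k ^ Suc d. X i = x i}
      = Pi {..<k} (\<lambda>j. {X. \<forall>i<k ^ d. X i = subtree_input (k ^ d) j x i})"
    using vimage_uncurry_blocks[of "k ^ d" k x] assms by (simp only: power_Suc) simp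
  show ?thesis
    unfolding leaf_likelihood_def
    by (simp only: broadcast_leaves.simps measure_map_pmf blocks
        measure_Pi_pmf_Pi[OF finite_lessThan] measure_bind_pmf_bool)
qed

lemma root_posterior_eq_likelihood:
  "root_posterior \<theta> k d x
    = leaf_likelihood \<theta> k d True x / (leaf_likelihood \<theta> k d True x + leaf_likelihood \<theta> k d False x)"
proof -
  have "(\<lambda>X. (True, X)) -` {(r, X). r \<and> (\<forall>i<k ^ d. X i = x i)} = {X. \<forall>i<k ^ d. X i = x i}"
    "(\<lambda>X. (False, X)) -` {(r, X). r \<and> (\<forall>i<k ^ d. X i = x i)} = {}"
    "(\<lambda>X. (b, X)) -` {(r, X). \<forall>i<k ^ d. X i = x i} = {X. \<forall>i<k ^ d. X i = x i}" for b
    by auto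
  then show ?thesis
    unfolding root_posterior_def broadcast_def measure_bind_pmf_bool
    by (simp add: measure_map_pmf leaf_likelihood_def[symmetric] add_divide_distrib[symmetric])
qed

section \<open>Circuits computing ternary functions\<close>

fun shift_circ :: "nat \<Rightarrow> circ \<Rightarrow> circ" where
  "shift_circ m (Inp i) = Inp (m + i)"
| "shift_circ m (Cst b) = Cst b"
| "shift_circ m (NotG c) = NotG (shift_circ m c)"
| "shift_circ m (AndG c1 c2) = AndG (shift_circ m c1) (shift_circ m c2)"
| "shift_circ m (OrG c1 c2) = OrG (shift_circ m c1) (shift_circ m c2)"

lemma eval_shift_circ: "eval_circ (shift_circ m c) x = eval_circ c (\<lambda>i. x (m + i))"
  and circ_depth_shift_circ: "circ_depth (shift_circ m c) = circ_depth c"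
  and circ_vars_shift_circ: "circ_vars (shift_circ m c) = (+) m ` circ_vars c"
  by (induction c) auto

definition bit_computable :: "nat \<Rightarrow> nat \<Rightarrow> ((nat \<Rightarrow> bool) \<Rightarrow> bool) \<Rightarrow> bool" where
  "bit_computable n D f \<longleftrightarrow>
     (\<exists>c. circ_vars c \<subseteq> {..<n} \<and> circ_depth c \<le> D \<and> (\<forall>x. f x = eval_circ c x))"

lemma bit_computable_mono: "bit_computable n D f \<Longrightarrow> D \<le> D' \<Longrightarrow> bit_computable n D' f"
  unfolding bit_computable_def by (meson order_trans)

lemma bit_computable_const: "bit_computable n D (\<lambda>x. b)"
  unfolding bit_computable_def by (intro exI[of _ "Cst b"]) auto

lemma bit_computable_input: "i < n \<Longrightarrow> bit_computable n D (\<lambda>x. x i)"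
  unfolding bit_computable_def by (intro exI[of _ "Inp i"]) auto

lemma bit_computable_not:
  "bit_computable n D f \<Longrightarrow> D < D' \<Longrightarrow> bit_computable n D' (\<lambda>x. \<not> f x)"
  unfolding bit_computable_def
  apply (elim exE conjE)
  subgoal for c by (intro exI[of _ "NotG c"]) auto
  done

lemma bit_computable_and:
  "bit_computable n D1 f \<Longrightarrow> bit_computable n D2 g \<Longrightarrow> D1 < D \<Longrightarrow> D2 < D
    \<Longrightarrow> bit_computable n D (\<lambda>x. f x \<and> g x)"
  unfolding bit_computable_def
  apply (elim exE conjE)
  subgoal for c1 c2 by (intro exI[of _ "AndG c1 c2"]) auto
  done

lemma bit_computable_or:
  "bit_computable n D1 f \<Longrightarrow> bit_computable n D2 g \<Longrightarrow> D1 < D \<Longrightarrow> D2 < D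
    \<Longrightarrow> bit_computable n D (\<lambda>x. f x \<or> g x)"
  unfolding bit_computable_def
  apply (elim exE conjE)
  subgoal for c1 c2 by (intro exI[of _ "OrG c1 c2"]) auto
  done

lemma bit_computable_subtree:
  "bit_computable n D f \<Longrightarrow> Suc j * n \<le> N \<Longrightarrow> bit_computable N D (\<lambda>x. f (subtree_input n j x))"
  unfolding bit_computable_def
  apply (elim exE conjE)
  subgoal for c
    by (intro exI[of _ "shift_circ (j * n) c"])
       (auto simp: eval_shift_circ circ_depth_shift_circ circ_vars_shift_circ subtree_input_def)
  done

definition ternary_computable :: "nat \<Rightarrow> nat \<Rightarrow> ternary_fn \<Rightarrow> bool" where
  "ternary_computable n D F \<longleftrightarrow>
     (\<exists>f1 f2. bit_computable n D f1 \<and> bit_computable n D f2 \<and>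
        (\<forall>x. F x = decode_out (f1 x) (f2 x)))"

lemma ternary_computable_mono:
  "ternary_computable n D F \<Longrightarrow> D \<le> D' \<Longrightarrow> ternary_computable n D' F"
  unfolding ternary_computable_def by (meson bit_computable_mono)

lemma ternary_computable_imp_computable_depth:
  assumes "ternary_computable n D F" "real D \<le> r"
  shows "computable_depth n r F"
proof -
  obtain f1 f2 where "bit_computable n D f1" "bit_computable n D f2"
    and F: "\<forall>x. F x = decode_out (f1 x) (f2 x)"
    using assms(1) unfolding ternary_computable_def by blast
  then obtain c1 c2 where "circ_vars c1 \<subseteq> {..<n}" "circ_depth c1 \<le> D" "\<forall>x. f1 x = eval_circ c1 x"
    and "circ_vars c2 \<subseteq> {..<n}" "circ_depth c2 \<le> D" "\<forall>x. f2 x = eval_circ c2 x"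
    unfolding bit_computable_def by blast
  with F assms(2) show ?thesis
    unfolding computable_depth_def by (intro exI[of _ c1] exI[of _ c2]) auto
qed

lemma ternary_computable_input: "i < n \<Longrightarrow> ternary_computable n D (\<lambda>x. Some (x i))"
  unfolding ternary_computable_def decode_out_def
  by (intro exI[of _ "\<lambda>x. True"] exI[of _ "\<lambda>x. x i"] conjI
      bit_computable_const bit_computable_input) auto

lemma ternary_computable_None: "ternary_computable n D (\<lambda>x. None)"
  unfolding ternary_computable_def decode_out_def
  by (intro exI[of _ "\<lambda>x. False"]) (auto intro: bit_computable_const)

definition consensus :: "ternary_fn \<Rightarrow> ternary_fn \<Rightarrow> ternary_fn" where
  "consensus F G x = (if F x = G x then F x else None)"

definition first_answer :: "ternary_fn \<Rightarrow> ternary_fn \<Rightarrow> ternary_fn" where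
  "first_answer F G x = (case F x of None \<Rightarrow> G x | Some b \<Rightarrow> Some b)"

(* The coin e decides whether the answer on the j-th subtree is passed on (True) or negated. *)
definition noisy_message :: "nat \<Rightarrow> nat \<Rightarrow> ternary_fn \<times> bool \<Rightarrow> ternary_fn" where
  "noisy_message n j Fe x = map_option (\<lambda>b. b = snd Fe) (fst Fe (subtree_input n j x))"

lemma ternary_computable_consensus:
  assumes "ternary_computable n D F" "ternary_computable n D G"
  shows "ternary_computable n (D + 4) (consensus F G)"
proof -
  obtain f1 f2 g1 g2 where f: "bit_computable n D f1" "bit_computable n D f2"
    and g: "bit_computable n D g1" "bit_computable n D g2"
    and FG: "\<forall>x. F x = decode_out (f1 x) (f2 x)" "\<forall>x. G x = decode_out (g1 x) (g2 x)"
    using assms unfolding ternary_computable_def by blast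
  have a1: "bit_computable n (D + 1) (\<lambda>x. f1 x \<and> g1 x)"
    by (rule bit_computable_and[OF f(1) g(1)]) auto
  have a2: "bit_computable n (D + 1) (\<lambda>x. f2 x \<and> g2 x)"
    by (rule bit_computable_and[OF f(2) g(2)]) auto
  have a3: "bit_computable n (D + 2) (\<lambda>x. \<not> f2 x \<and> \<not> g2 x)"
    by (rule bit_computable_and[OF bit_computable_not[OF f(2)] bit_computable_not[OF g(2)]]) auto
  have a4: "bit_computable n (D + 3) (\<lambda>x. (f2 x \<and> g2 x) \<or> (\<not> f2 x \<and> \<not> g2 x))"
    by (rule bit_computable_or[OF a2 a3]) auto
  have "bit_computable n (D + 4) (\<lambda>x. (f1 x \<and> g1 x) \<and> ((f2 x \<and> g2 x) \<or> (\<not> f2 x \<and> \<not> g2 x)))"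
    by (rule bit_computable_and[OF a1 a4]) auto
  moreover have "bit_computable n (D + 4) f2"
    using f(2) by (rule bit_computable_mono) simp
  ultimately show ?thesis
    unfolding ternary_computable_def using FG
    by (intro exI[of _ "\<lambda>x. (f1 x \<and> g1 x) \<and> ((f2 x \<and> g2 x) \<or> (\<not> f2 x \<and> \<not> g2 x))"]
        exI[of _ f2] conjI) (auto simp: consensus_def decode_out_def)
qed

lemma ternary_computable_first_answer:
  assumes "ternary_computable n D F" "ternary_computable n D G"
  shows "ternary_computable n (D + 3) (first_answer F G)"
proof -
  obtain f1 f2 g1 g2 where f: "bit_computable n D f1" "bit_computable n D f2"
    and g: "bit_computable n D g1" "bit_computable n D g2"
    and FG: "\<forall>x. F x = decode_out (f1 x) (f2 x)" "\<forall>x. G x = decode_out (g1 x) (g2 x)"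
    using assms unfolding ternary_computable_def by blast
  have "bit_computable n (D + 3) (\<lambda>x. f1 x \<or> g1 x)"
    by (rule bit_computable_or[OF f(1) g(1)]) auto
  moreover have a1: "bit_computable n (D + 1) (\<lambda>x. f1 x \<and> f2 x)"
    by (rule bit_computable_and[OF f]) auto
  have a2: "bit_computable n (D + 2) (\<lambda>x. \<not> f1 x \<and> g2 x)"
    by (rule bit_computable_and[OF bit_computable_not[OF f(1)] g(2)]) auto
  have "bit_computable n (D + 3) (\<lambda>x. (f1 x \<and> f2 x) \<or> (\<not> f1 x \<and> g2 x))"
    by (rule bit_computable_or[OF a1 a2]) auto
  ultimately show ?thesis
    unfolding ternary_computable_def using FG
    by (intro exI[of _ "\<lambda>x. f1 x \<or> g1 x"] exI[of _ "\<lambda>x. (f1 x \<and> f2 x) \<or> (\<not> f1 x \<and> g2 x)"] conjI)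
       (auto simp: first_answer_def decode_out_def)
qed

lemma ternary_computable_noisy_message:
  assumes "ternary_computable n D F" "Suc j * n \<le> N"
  shows "ternary_computable N (Suc D) (noisy_message n j (F, e))"
proof -
  obtain f1 f2 where f: "bit_computable n D f1" "bit_computable n D f2"
    and F: "\<forall>x. F x = decode_out (f1 x) (f2 x)"
    using assms(1) unfolding ternary_computable_def by blast
  have "bit_computable N (Suc D) (\<lambda>x. f1 (subtree_input n j x))"
    using bit_computable_subtree[OF f(1) assms(2)] by (rule bit_computable_mono) simp
  moreover have "bit_computable N (Suc D) (\<lambda>x. f2 (subtree_input n j x) = e)"
    using bit_computable_subtree[OF f(2) assms(2)]
    by (cases e) (auto intro: bit_computable_mono bit_computable_not)
  ultimately show ?thesis
    unfolding ternary_computable_def using F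
    by (intro exI[of _ "\<lambda>x. f1 (subtree_input n j x)"] exI[of _ "\<lambda>x. f2 (subtree_input n j x) = e"] conjI)
       (auto simp: noisy_message_def decode_out_def)
qed

section \<open>Random ternary functions\<close>

lemma measure_answered:
  fixes R :: "ternary_fn pmf"
  shows "measure_pmf.prob R {F. F x \<noteq> None}
    = measure_pmf.prob R {F. F x = Some True} + measure_pmf.prob R {F. F x = Some False}"
proof -
  have "{F. F x \<noteq> None} = {F. F x = Some True} \<union> {F. F x = Some False}" by auto
  then show ?thesis by (simp only:) (rule measure_pmf.finite_measure_Union; auto)
qed

lemma measure_unanswered:
  fixes R :: "ternary_fn pmf"
  shows "measure_pmf.prob R {F. F x = None} = 1 - measure_pmf.prob R {F. F x \<noteq> None}"
proof -
  have "{F. F x = None} = space (measure_pmf R) - {F. F x \<noteq> None}" by auto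
  then show ?thesis by (simp only:) (rule measure_pmf.prob_compl; simp)
qed

definition child_message_pmf :: "real \<Rightarrow> nat \<Rightarrow> ternary_fn pmf \<Rightarrow> nat \<Rightarrow> ternary_fn pmf" where
  "child_message_pmf \<theta> n R j = map_pmf (noisy_message n j) (pair_pmf R (bernoulli_pmf ((1 + \<theta>) / 2)))"

lemma measure_child_message_pmf:
  assumes "-1 \<le> \<theta>" "\<theta> \<le> 1"
  shows "measure_pmf.prob (child_message_pmf \<theta> n R j) {F. F x = Some a}
    = (1 + \<theta>) / 2 * measure_pmf.prob R {F. F (subtree_input n j x) = Some a}
    + (1 - \<theta>) / 2 * measure_pmf.prob R {F. F (subtree_input n j x) = Some (\<not> a)}"
proof -
  let ?B = "bernoulli_pmf ((1 + \<theta>) / 2)" and ?y = "subtree_input n j x"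
  have "noisy_message n j -` {F. F x = Some a}
      = {F. F ?y = Some a} \<times> {True} \<union> {F. F ?y = Some (\<not> a)} \<times> {False}"
    by (auto simp: noisy_message_def)
  then have "measure_pmf.prob (child_message_pmf \<theta> n R j) {F. F x = Some a}
      = measure_pmf.prob (pair_pmf R ?B) ({F. F ?y = Some a} \<times> {True})
      + measure_pmf.prob (pair_pmf R ?B) ({F. F ?y = Some (\<not> a)} \<times> {False})"
    by (simp add: child_message_pmf_def) (rule measure_pmf.finite_measure_Union; auto)
  with assms show ?thesis
    by (simp add: measure_pair_pmf_Times measure_pmf_single field_simps)
qed

fun unanimity_pmf :: "real \<Rightarrow> nat \<Rightarrow> ternary_fn pmf \<Rightarrow> nat \<Rightarrow> ternary_fn pmf" where
  "unanimity_pmf \<theta> n R 0 = child_message_pmf \<theta> n R 0"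
| "unanimity_pmf \<theta> n R (Suc m) =
     map_pmf (case_prod consensus) (pair_pmf (unanimity_pmf \<theta> n R m) (child_message_pmf \<theta> n R (Suc m)))"

lemma measure_unanimity_pmf:
  "measure_pmf.prob (unanimity_pmf \<theta> n R m) {F. F x = Some a}
    = (\<Prod>j<Suc m. measure_pmf.prob (child_message_pmf \<theta> n R j) {F. F x = Some a})"
proof (induction m)
  case 0
  then show ?case by simp
next
  case (Suc m)
  have "case_prod consensus -` {F. F x = Some a} = {F. F x = Some a} \<times> {G. G x = Some a}"
    by (auto simp: consensus_def split: if_splits)
  with Suc show ?case by (simp add: measure_pair_pmf_Times)
qed

lemma ternary_computable_unanimity_pmf:
  assumes "\<forall>F\<in>set_pmf R. ternary_computable n D F" "m < k"
  shows "\<forall>F\<in>set_pmf (unanimity_pmf \<theta> n R m). ternary_computable (k * n) (D + 1 + 4 * m) F"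
  using assms(2)
proof (induction m)
  case 0
  then have "Suc 0 * n \<le> k * n" by simp
  with assms(1) show ?case
    by (auto simp: child_message_pmf_def intro!: ternary_computable_noisy_message)
next
  case (Suc m)
  then have "Suc (Suc m) * n \<le> k * n" by (intro mult_le_mono1) simp
  with assms(1) have "\<forall>G\<in>set_pmf (child_message_pmf \<theta> n R (Suc m)). ternary_computable (k * n) (D + 1 + 4 * m) G"
    by (auto simp: child_message_pmf_def intro!: ternary_computable_mono[OF ternary_computable_noisy_message])
  with Suc show ?case
    by (auto intro!: ternary_computable_mono[OF ternary_computable_consensus])
qed

fun retry_pmf :: "ternary_fn pmf \<Rightarrow> nat \<Rightarrow> ternary_fn pmf" where
  "retry_pmf P 0 = return_pmf (\<lambda>x. None)"
| "retry_pmf P (Suc t) = map_pmf (case_prod first_answer) (pair_pmf P (retry_pmf P t))"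

lemma measure_retry_pmf_None:
  "measure_pmf.prob (retry_pmf P t) {F. F x = None} = measure_pmf.prob P {F. F x = None} ^ t"
proof (induction t)
  case 0
  then show ?case by simp
next
  case (Suc t)
  have "case_prod first_answer -` {F. F x = None} = {F. F x = None} \<times> {G. G x = None}"
    by (auto simp: first_answer_def split: option.splits)
  with Suc show ?case by (simp add: measure_pair_pmf_Times)
qed

lemma measure_retry_pmf_Some:
  "measure_pmf.prob (retry_pmf P t) {F. F x = Some a}
    = measure_pmf.prob P {F. F x = Some a} * (\<Sum>i<t. measure_pmf.prob P {F. F x = None} ^ i)"
proof (induction t)
  case 0
  then show ?case by simp
next
  case (Suc t)
  let ?p = "measure_pmf.prob P {F. F x = Some a}" and ?q = "measure_pmf.prob P {F. F x = None}"
  have "case_prod first_answer -` {F. F x = Some a}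
      = {F. F x = Some a} \<times> UNIV \<union> {F. F x = None} \<times> {G. G x = Some a}"
    by (auto simp: first_answer_def split: option.splits)
  then have "measure_pmf.prob (retry_pmf P (Suc t)) {F. F x = Some a}
      = ?p + ?q * measure_pmf.prob (retry_pmf P t) {F. F x = Some a}"
    by simp (subst measure_pmf.finite_measure_Union; auto simp: measure_pair_pmf_Times)
  also have "\<dots> = ?p * (1 + (\<Sum>i<t. ?q * ?q ^ i))"
    by (simp add: Suc sum_distrib_left algebra_simps)
  also have "\<dots> = ?p * (\<Sum>i<Suc t. ?q ^ i)"
    by (simp only: sum.lessThan_Suc_shift power_Suc power_0)
  finally show ?case .
qed

lemma ternary_computable_retry_pmf:
  assumes "\<forall>F\<in>set_pmf P. ternary_computable n D F"
  shows "\<forall>F\<in>set_pmf (retry_pmf P t). ternary_computable n (D + 3 * t) F"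
proof (induction t)
  case 0
  then show ?case by (simp add: ternary_computable_None)
next
  case (Suc t)
  with assms show ?case
    by (auto intro!: ternary_computable_mono[OF ternary_computable_first_answer[of n "D + 3 * t"]]
        intro: ternary_computable_mono)
qed

lemma measure_retry_pmf_answered:
  "measure_pmf.prob (retry_pmf P t) {F. F x \<noteq> None} = 1 - measure_pmf.prob P {F. F x = None} ^ t"
  using measure_unanswered[of "retry_pmf P t" x] by (simp add: measure_retry_pmf_None)

lemma measure_child_message_True_ge:
  assumes "-1 \<le> \<theta>" "\<theta> \<le> 1"
    and answered: "1 / 2 \<le> measure_pmf.prob R {F. F (subtree_input n j x) \<noteq> None}"
  shows "min ((1 + \<theta>) / 2) ((1 - \<theta>) / 2) / 2
    \<le> measure_pmf.prob (child_message_pmf \<theta> n R j) {F. F x = Some True}"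
proof -
  let ?m = "min ((1 + \<theta>) / 2) ((1 - \<theta>) / 2)"
  let ?pT = "measure_pmf.prob R {F. F (subtree_input n j x) = Some True}"
  let ?pF = "measure_pmf.prob R {F. F (subtree_input n j x) = Some False}"
  have "1 / 2 \<le> ?pT + ?pF"
    using answered by (simp only: measure_answered)
  moreover have "0 \<le> ?m"
    using assms(1,2) by simp
  ultimately have "?m / 2 \<le> ?m * (?pT + ?pF)"
    using mult_left_mono[of "1 / 2" "?pT + ?pF" ?m] by simp
  also have "\<dots> \<le> (1 + \<theta>) / 2 * ?pT + (1 - \<theta>) / 2 * ?pF"
    unfolding distrib_left by (intro add_mono mult_right_mono) (simp_all add: min_def)
  also have "\<dots> = measure_pmf.prob (child_message_pmf \<theta> n R j) {F. F x = Some True}"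
    using assms(1,2) by (simp add: measure_child_message_pmf)
  finally show ?thesis .
qed

lemma measure_unanimity_True_ge:
  assumes "-1 \<le> \<theta>" "\<theta> \<le> 1"
    and answered: "\<forall>y. 1 / 2 \<le> measure_pmf.prob R {F. F y \<noteq> None}"
  shows "(min ((1 + \<theta>) / 2) ((1 - \<theta>) / 2) / 2) ^ Suc m
    \<le> measure_pmf.prob (unanimity_pmf \<theta> n R m) {F. F x = Some True}"
proof -
  have "(min ((1 + \<theta>) / 2) ((1 - \<theta>) / 2) / 2) ^ Suc m = (\<Prod>j<Suc m. min ((1 + \<theta>) / 2) ((1 - \<theta>) / 2) / 2)"
    by simp
  also have "\<dots> \<le> (\<Prod>j<Suc m. measure_pmf.prob (child_message_pmf \<theta> n R j) {F. F x = Some True})"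
    using assms by (intro prod_mono conjI measure_child_message_True_ge) auto
  finally show ?thesis by (simp only: measure_unanimity_pmf)
qed

section \<open>Reconstruction\<close>

definition likelihood_proportional :: "real \<Rightarrow> nat \<Rightarrow> nat \<Rightarrow> ternary_fn pmf \<Rightarrow> bool" where
  "likelihood_proportional \<theta> k d R \<longleftrightarrow>
     (\<exists>c. \<forall>x b. measure_pmf.prob R {F. F x = Some b} = c x * leaf_likelihood \<theta> k d b x)"

lemma likelihood_proportional_unanimity_pmf:
  assumes "-1 \<le> \<theta>" "\<theta> \<le> 1" "0 < k" "likelihood_proportional \<theta> k d R"
  shows "likelihood_proportional \<theta> k (Suc d) (unanimity_pmf \<theta> (k ^ d) R (k - 1))"
proof -
  obtain c where c: "\<forall>x b. measure_pmf.prob R {F. F x = Some b} = c x * leaf_likelihood \<theta> k d b x"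
    using assms(4) unfolding likelihood_proportional_def by blast
  have child: "measure_pmf.prob (child_message_pmf \<theta> (k ^ d) R j) {F. F x = Some a}
      = c (subtree_input (k ^ d) j x) *
        (pmf (child_label \<theta> a) True * leaf_likelihood \<theta> k d True (subtree_input (k ^ d) j x)
         + pmf (child_label \<theta> a) False * leaf_likelihood \<theta> k d False (subtree_input (k ^ d) j x))"
    for j x a
    using assms(1,2) by (cases a) (simp_all add: measure_child_message_pmf c pmf_child_label algebra_simps)
  have "Suc (k - 1) = k" using assms(3) by simp
  then have unanimity: "measure_pmf.prob (unanimity_pmf \<theta> (k ^ d) R (k - 1)) {F. F x = Some a}
      = (\<Prod>j<k. c (subtree_input (k ^ d) j x)) * leaf_likelihood \<theta> k (Suc d) a x" for x a
    by (simp add: measure_unanimity_pmf child leaf_likelihood_Suc[OF assms(3)] prod.distrib)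
  show ?thesis
    unfolding likelihood_proportional_def
    by (intro exI[of _ "\<lambda>x. \<Prod>j<k. c (subtree_input (k ^ d) j x)"] allI unanimity)
qed

lemma likelihood_proportional_retry_pmf:
  assumes "likelihood_proportional \<theta> k d P"
  shows "likelihood_proportional \<theta> k d (retry_pmf P t)"
proof -
  obtain c where c: "\<forall>x b. measure_pmf.prob P {F. F x = Some b} = c x * leaf_likelihood \<theta> k d b x"
    using assms unfolding likelihood_proportional_def by blast
  show ?thesis
    unfolding likelihood_proportional_def measure_retry_pmf_Some
    by (intro exI[of _ "\<lambda>x. c x * (\<Sum>i<t. measure_pmf.prob P {F. F x = None} ^ i)"]) (simp add: c)
qed

lemma answer_ratio_eq_root_posterior:
  assumes "likelihood_proportional \<theta> k d R" "0 < measure_pmf.prob R {F. F x \<noteq> None}"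
  shows "measure_pmf.prob R {F. F x = Some True} / measure_pmf.prob R {F. F x \<noteq> None}
    = root_posterior \<theta> k d x"
proof -
  obtain c where c: "\<forall>x b. measure_pmf.prob R {F. F x = Some b} = c x * leaf_likelihood \<theta> k d b x"
    using assms(1) unfolding likelihood_proportional_def by blast
  then have answered: "measure_pmf.prob R {F. F x \<noteq> None}
      = c x * (leaf_likelihood \<theta> k d True x + leaf_likelihood \<theta> k d False x)"
    by (simp only: measure_answered distrib_left)
  with assms(2) have "c x \<noteq> 0" by auto
  with answered c show ?thesis
    by (simp add: root_posterior_eq_likelihood)
qed

lemma reconstruction_step:
  assumes "-1 \<le> \<theta>" "\<theta> \<le> 1" "0 < k"
    and computable: "\<forall>F\<in>set_pmf R. ternary_computable (k ^ d) D F"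
    and answered: "\<forall>x. 1 / 2 \<le> measure_pmf.prob R {F. F x \<noteq> None}"
    and proportional: "likelihood_proportional \<theta> k d R"
    and T: "(1 - (min ((1 + \<theta>) / 2) ((1 - \<theta>) / 2) / 2) ^ k) ^ T \<le> 1 / (2 * real k)"
  shows "\<exists>R'. (\<forall>F\<in>set_pmf R'. ternary_computable (k ^ Suc d) (D + 1 + 4 * k + 3 * T) F) \<and>
    (\<forall>x. 1 - 1 / (2 * real k) \<le> measure_pmf.prob R' {F. F x \<noteq> None}) \<and>
    likelihood_proportional \<theta> k (Suc d) R'"
proof (intro exI conjI allI)
  define P where "P = unanimity_pmf \<theta> (k ^ d) R (k - 1)"
  have "\<forall>F\<in>set_pmf P. ternary_computable (k ^ Suc d) (D + 1 + 4 * k) F"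
    using ternary_computable_unanimity_pmf[OF computable, of "k - 1" k \<theta>] assms(3)
    by (auto simp: P_def mult.commute intro: ternary_computable_mono)
  then show "\<forall>F\<in>set_pmf (retry_pmf P T). ternary_computable (k ^ Suc d) (D + 1 + 4 * k + 3 * T) F"
    by (rule ternary_computable_retry_pmf)
  fix x
  have "(min ((1 + \<theta>) / 2) ((1 - \<theta>) / 2) / 2) ^ k \<le> measure_pmf.prob P {F. F x = Some True}"
    using measure_unanimity_True_ge[OF assms(1,2) answered, of "k - 1"] assms(3) by (simp add: P_def)
  then have "measure_pmf.prob P {F. F x = None} \<le> 1 - (min ((1 + \<theta>) / 2) ((1 - \<theta>) / 2) / 2) ^ k"
    using measure_unanswered[of P x] measure_answered[of P x]
      measure_nonneg[of P "{F. F x = Some False}"] by linarith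
  then have "measure_pmf.prob P {F. F x = None} ^ T \<le> 1 / (2 * real k)"
    using T by (meson power_mono measure_nonneg order_trans)
  then show "1 - 1 / (2 * real k) \<le> measure_pmf.prob (retry_pmf P T) {F. F x \<noteq> None}"
    by (simp only: measure_retry_pmf_answered)
  show "likelihood_proportional \<theta> k (Suc d) (retry_pmf P T)"
    unfolding P_def using assms(1-3) proportional
    by (intro likelihood_proportional_retry_pmf likelihood_proportional_unanimity_pmf)
qed

lemma reconstruction_exists:
  assumes "-1 < \<theta>" "\<theta> < 1" "0 < k"
  shows "\<exists>h::real. 0 < h \<and> (\<forall>d. \<exists>R. (\<forall>F\<in>set_pmf R. computable_depth (k ^ d) (h * real d) F) \<and>
    (\<forall>x. 1 - 1 / (2 * real k) \<le> measure_pmf.prob R {F. F x \<noteq> None}) \<and>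
    likelihood_proportional \<theta> k d R)"
proof -
  let ?q = "(min ((1 + \<theta>) / 2) ((1 - \<theta>) / 2) / 2) ^ k"
  have "0 < ?q" using assms by simp
  then obtain T where T: "(1 - ?q) ^ T < 1 / (2 * real k)"
    using real_arch_pow_inv[of "1 / (2 * real k)" "1 - ?q"] assms(3) by auto
  define H where "H = 1 + 4 * k + 3 * T"
  have half: "1 / 2 \<le> 1 - 1 / (2 * real k)"
    using assms(3) by (simp add: field_simps)
  have "\<exists>R. (\<forall>F\<in>set_pmf R. ternary_computable (k ^ d) (H * d) F) \<and>
    (\<forall>x. 1 - 1 / (2 * real k) \<le> measure_pmf.prob R {F. F x \<noteq> None}) \<and>
    likelihood_proportional \<theta> k d R" for d
  proof (induction d)
    case 0
    have "likelihood_proportional \<theta> k 0 (return_pmf (\<lambda>x. Some (x 0)))"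
      unfolding likelihood_proportional_def
      by (intro exI[of _ "\<lambda>x. 1"]) (simp add: leaf_likelihood_0 indicator_def)
    then show ?case
      by (intro exI[of _ "return_pmf (\<lambda>x. Some (x 0))"]) (simp add: ternary_computable_input)
  next
    case (Suc d)
    then obtain R where computable: "\<forall>F\<in>set_pmf R. ternary_computable (k ^ d) (H * d) F"
      and answered: "\<forall>x. 1 - 1 / (2 * real k) \<le> measure_pmf.prob R {F. F x \<noteq> None}"
      and proportional: "likelihood_proportional \<theta> k d R"
      by blast
    have "\<forall>x. 1 / 2 \<le> measure_pmf.prob R {F. F x \<noteq> None}"
      using answered half order_trans by blast
    moreover have "H * Suc d = H * d + 1 + 4 * k + 3 * T" by (simp add: H_def)
    ultimately show ?case
      using assms T by (simp only:) (intro reconstruction_step[OF _ _ assms(3) computable _ proportional]; simp)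
  qed
  moreover have "computable_depth (k ^ d) (real H * real d) F" if "ternary_computable (k ^ d) (H * d) F" for d F
    using that by (rule ternary_computable_imp_computable_depth) simp
  ultimately show ?thesis
    by (intro exI[of _ "real H"] conjI) (simp add: H_def, blast)
qed

theorem mainTheorem19:
  fixes \<theta> :: real and k :: nat
  assumes "-1 < \<theta>" and "\<theta> < 1" and "0 < k"
  shows "\<exists>h::real. h > 0 \<and> (\<forall>d::nat. \<exists>PF :: ((nat \<Rightarrow> bool) \<Rightarrow> bool option) pmf.
     (\<forall>F \<in> set_pmf PF. computable_depth (k ^ d) (h * real d) F) \<and>
     (\<forall>x. measure_pmf.prob PF {F. F x \<noteq> None} \<ge> 1 - 1 / (2 * real k)) \<and>
     (\<forall>x. measure_pmf.prob PF {F. F x = Some True} / measure_pmf.prob PF {F. F x \<noteq> None}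
            = root_posterior \<theta> k d x))"
proof -
  have "0 < 1 - 1 / (2 * real k)"
    using assms(3) by (simp add: field_simps)
  then have "0 < measure_pmf.prob R {F. F x \<noteq> None}"
    if "\<forall>x. 1 - 1 / (2 * real k) \<le> measure_pmf.prob R {F. F x \<noteq> None}" for R :: "ternary_fn pmf" and x
    using that order_less_le_trans by blast
  with reconstruction_exists[OF assms] show ?thesis
    by (blast intro: answer_ratio_eq_root_posterior)
qed

end
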